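(* Let $k\ge4$ be even and $\alpha\ge1$ an integer, and let $G=C(\alpha,\alpha+1,\alpha+2,\dots,\alpha+k-1)$. Then $\omega(G)=a(G)$ $(=\alpha+k-1)$.
   Context: $C(\alpha_1,\dots,\alpha_k)$ is defined recursively by $C(\alpha_1)=\overline{K_{\alpha_1}}$ (edgeless graph) and $C(\alpha_1,\dots,\alpha_i)=\overline{C(\alpha_1,\dots,\alpha_{i-1})\cup K_{\alpha_i}}$ for $i=2,\dots,k$ (disjoint union, then complement). Equivalently for $k$ even, with $\pi_i$ the $\alpha_i$ vertices introduced at step $i$: $\pi_i$ is a clique for $i$ odd, independent for $i$ even, and for $i<j$ vertices of $\pi_i,\pi_j$ are adjacent iff $j$ is even. $\omega(G)$ is the clique number; $a(G)$ is the second smallest eigenvalue of the Laplacian $L=D-A$. *)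

theory Defs
  imports "Jordan_Normal_Form.Char_Poly" "HOL-Library.Multiset" "HOL-Library.Product_Lexorder"
begin

text \<open>Simple graphs on vertices of type nat \<times> nat: a vertex (i, j) is the j-th vertex
  introduced at step i+1 of the construction (steps are 0-indexed here).\<close>

definition Cverts :: "nat list \<Rightarrow> (nat \<times> nat) set" where
  "Cverts as = {(i, j). i < length as \<and> j < as ! i}"

text \<open>Recursive construction, on the reversed list of sizes:
  C(a_1) is edgeless; C(a_1..a_i) = complement of (C(a_1..a_{i-1}) disjoint-union K_{a_i}).
  The newest block in the reversed list a # rest has index length rest.\<close>
fun Cadj_rev :: "nat list \<Rightarrow> nat \<times> nat \<Rightarrow> nat \<times> nat \<Rightarrow> bool" where
  "Cadj_rev [] u v = False"
| "Cadj_rev [a] u v = False"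
| "Cadj_rev (a # b # rest) u v =
     (u \<noteq> v \<and> u \<in> Cverts (rev (a # b # rest)) \<and> v \<in> Cverts (rev (a # b # rest)) \<and>
      \<not> (Cadj_rev (b # rest) u v \<or>
         (fst u = length (b # rest) \<and> fst v = length (b # rest))))"

definition Cadj :: "nat list \<Rightarrow> nat \<times> nat \<Rightarrow> nat \<times> nat \<Rightarrow> bool" where
  "Cadj as = Cadj_rev (rev as)"

definition clique_number :: "'v set \<Rightarrow> ('v \<Rightarrow> 'v \<Rightarrow> bool) \<Rightarrow> nat" where
  "clique_number V E = Max (card ` {S. S \<subseteq> V \<and> (\<forall>u\<in>S. \<forall>v\<in>S. u \<noteq> v \<longrightarrow> E u v)})"

definition laplacian :: "'v::linorder set \<Rightarrow> ('v \<Rightarrow> 'v \<Rightarrow> bool) \<Rightarrow> real mat" where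
  "laplacian V E = (let vs = sorted_list_of_set V; n = length vs in
     mat n n (\<lambda>(i, j). if i = j then real (card {w \<in> V. E (vs ! i) w})
                       else if E (vs ! i) (vs ! j) then -1 else 0))"

definition laplacian_eigenvalues :: "'v::linorder set \<Rightarrow> ('v \<Rightarrow> 'v \<Rightarrow> bool) \<Rightarrow> real list" where
  "laplacian_eigenvalues V E = sorted_list_of_multiset (proots (char_poly (laplacian V E)))"

definition alg_conn :: "'v::linorder set \<Rightarrow> ('v \<Rightarrow> 'v \<Rightarrow> bool) \<Rightarrow> real" where
  "alg_conn V E = laplacian_eigenvalues V E ! 1"

end

theory Submission
  imports Defs
begin

text \<open>The Laplacian of \<open>G\<close> has an explicit orthogonal eigenbasis: weighted Helmert vectors that are
  constant on every block (the weights being the block sizes), and ordinary Helmert vectors supported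
  inside a single block. Their eigenvalues can be written down, and apart from the eigenvalue 0 of the
  constant vector the smallest one is \<open>\<alpha> + k - 1\<close>, attained by the block vector of block \<open>k - 2\<close>.
  On the other side, a clique meets at most one clique block and, after it, at most one vertex of
  each later independent block; block \<open>k - 2\<close> plus one vertex of block \<open>k - 1\<close> is such a clique
  of size \<open>\<alpha> + k - 1\<close>.\<close>

lemma Cverts_snoc: "Cverts (xs @ [a]) = Cverts xs \<union> {(length xs, j) | j. j < a}"
  unfolding Cverts_def by (auto simp: nth_append less_Suc_eq)

text \<open>Every later step complements the graph once, so adjacency is decided by the parity of the
  number of steps after the later of the two blocks.\<close>
lemma Cadj_rev_iff:
  assumes "r \<noteq> []"
  shows "Cadj_rev r u v \<longleftrightarrow> u \<noteq> v \<and> u \<in> Cverts (rev r) \<and> v \<in> Cverts (rev r) \<and>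
     (if fst u = fst v then even (length r - fst u) else odd (length r - max (fst u) (fst v)))"
  using assms
proof (induction r u v rule: Cadj_rev.induct)
  case (2 a u v)
  then show ?case by (auto simp: Cverts_def)
next
  case (3 a b rest u v)
  have IH: "Cadj_rev (b # rest) u v \<longleftrightarrow> u \<noteq> v \<and> u \<in> Cverts (rev (b # rest)) \<and> v \<in> Cverts (rev (b # rest)) \<and>
     (if fst u = fst v then even (length (b # rest) - fst u)
      else odd (length (b # rest) - max (fst u) (fst v)))"
    using 3 by simp
  have verts: "Cverts (rev (a # b # rest)) = Cverts (rev (b # rest)) \<union> {(length (b # rest), j) | j. j < a}"
    using Cverts_snoc[of "rev (b # rest)" a] by simp
  have "w \<in> Cverts (rev (b # rest)) \<Longrightarrow> fst w < length (b # rest)" for w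
    unfolding Cverts_def by auto
  from this[of u] this[of v] show ?case
    unfolding Cadj_rev.simps(3) IH verts
    by (cases u; cases v) (auto split: if_splits simp: max_def)
qed simp

lemma Cadj_iff:
  assumes "as \<noteq> []"
  shows "Cadj as u v \<longleftrightarrow> u \<noteq> v \<and> u \<in> Cverts as \<and> v \<in> Cverts as \<and>
     (if fst u = fst v then even (length as - fst u) else odd (length as - max (fst u) (fst v)))"
  using Cadj_rev_iff[of "rev as"] assms by (simp add: Cadj_def)

definition cliques :: "'v set \<Rightarrow> ('v \<Rightarrow> 'v \<Rightarrow> bool) \<Rightarrow> 'v set set" where
  "cliques V E = {S. S \<subseteq> V \<and> (\<forall>u\<in>S. \<forall>v\<in>S. u \<noteq> v \<longrightarrow> E u v)}"

lemma clique_number_eqI: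
  assumes "finite V" and "S \<in> cliques V E" and "card S = n"
    and "\<And>S. S \<in> cliques V E \<Longrightarrow> card S \<le> n"
  shows "clique_number V E = n"
  unfolding clique_number_def cliques_def[symmetric]
proof (rule Max_eqI)
  have "cliques V E \<subseteq> Pow V" unfolding cliques_def by auto
  then show "finite (card ` cliques V E)"
    using assms(1) by (meson finite_Pow_iff finite_imageI finite_subset)
qed (use assms in auto)

section \<open>The spectrum of a Laplacian with an orthogonal eigenbasis\<close>

definition laplacian_apply :: "'v set \<Rightarrow> ('v \<Rightarrow> 'v \<Rightarrow> bool) \<Rightarrow> ('v \<Rightarrow> real) \<Rightarrow> 'v \<Rightarrow> real" where
  "laplacian_apply V E f u = (\<Sum>w\<in>{w\<in>V. E u w}. f u - f w)"

lemma diag_mat_mat_diag: "diag_mat (mat_diag n d) = map d [0..<n]"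
  by (simp add: diag_mat_def mat_diag_def list_eq_iff_nth_eq)

lemma char_poly_diagonalizable:
  fixes A P :: "'a::field mat"
  assumes A: "A \<in> carrier_mat n n" and P: "P \<in> carrier_mat n n"
    and AP: "A * P = P * mat_diag n d" and det: "det P \<noteq> 0"
  shows "char_poly A = (\<Prod>a\<leftarrow>map d [0..<n]. [:- a, 1:])"
proof -
  obtain Q where Q: "Q \<in> carrier_mat n n" "P * Q = 1\<^sub>m n" "Q * P = 1\<^sub>m n"
    using det_non_zero_imp_unit[OF P det] unfolding Units_def ring_mat_def by auto
  have "A = A * (P * Q)" using A Q by simp
  also have "\<dots> = (A * P) * Q" using A P Q by (simp add: assoc_mult_mat)
  also have "\<dots> = P * mat_diag n d * Q" using AP by simp
  finally have "similar_mat A (mat_diag n d)"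
    using similar_matI[of A "mat_diag n d" P Q n] A P Q by auto
  then have "char_poly A = char_poly (mat_diag n d)" by (rule char_poly_similar)
  also have "\<dots> = (\<Prod>a\<leftarrow>diag_mat (mat_diag n d). [:- a, 1:])"
    by (rule char_poly_upper_triangular) (auto simp: upper_triangular_def mat_diag_def)
  finally show ?thesis by (simp only: diag_mat_mat_diag)
qed

lemma proots_prod_linear_factors: "proots (\<Prod>a\<leftarrow>xs. [:- a, 1:]) = mset (xs :: 'a::idom list)"
proof (induction xs)
  case (Cons a xs)
  have "(\<Prod>a\<leftarrow>xs. [:- a, 1:]) \<noteq> 0" by (auto simp: prod_list_zero_iff)
  then have "proots (\<Prod>a\<leftarrow>a # xs. [:- a, 1:]) = proots [:- a, 1:] + proots (\<Prod>a\<leftarrow>xs. [:- a, 1:])"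
    by (simp only: list.map prod_list.Cons, intro proots_mult) auto
  then show ?case using Cons by simp
qed simp

lemma det_ne_zero_if_orthogonal_columns:
  fixes P :: "real mat"
  assumes P: "P \<in> carrier_mat n n"
    and orth: "\<And>i j. i < n \<Longrightarrow> j < n \<Longrightarrow> i \<noteq> j \<Longrightarrow> (\<Sum>t<n. P $$ (t, i) * P $$ (t, j)) = 0"
    and nonzero: "\<And>j. j < n \<Longrightarrow> \<exists>t<n. P $$ (t, j) \<noteq> 0"
  shows "det P \<noteq> 0"
proof -
  define d where "d j = (\<Sum>t<n. P $$ (t, j) * P $$ (t, j))" for j
  have gram: "transpose_mat P * P = mat_diag n d"
    by (rule eq_matI) (use P orth in \<open>auto simp: mat_diag_def d_def scalar_prod_def lessThan_atLeast0\<close>)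
  have "d j > 0" if j: "j < n" for j
  proof -
    obtain t where t: "t < n" "P $$ (t, j) \<noteq> 0" using nonzero[OF j] by blast
    have "P $$ (t, j) * P $$ (t, j) \<le> d j"
      unfolding d_def by (rule member_le_sum) (use t in auto)
    then show ?thesis using t(2) not_real_square_gt_zero by fastforce
  qed
  then have "0 \<notin> set (map d [0..<n])" by fastforce
  moreover have "det (mat_diag n d) = prod_list (diag_mat (mat_diag n d))"
    by (rule det_upper_triangular[OF _ mat_diag_dim]) (simp add: upper_triangular_def mat_diag_def)
  ultimately have "det (mat_diag n d) \<noteq> 0" by (simp add: prod_list_zero_iff diag_mat_mat_diag)
  moreover have "det (transpose_mat P * P) = det (transpose_mat P) * det P"
    using P by (intro det_mult) auto
  ultimately show ?thesis using gram by simp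
qed

lemma sum_nth_distinct: "distinct xs \<Longrightarrow> (\<Sum>t<length xs. g (xs ! t)) = sum g (set xs)"
  by (simp add: sum.distinct_set_conv_list sum_list_sum_nth lessThan_atLeast0)

lemma laplacian_mult_mat:
  fixes V :: "'v::linorder set"
  defines "vs \<equiv> sorted_list_of_set V"
  assumes V: "finite V" and irrefl: "\<And>u. \<not> E u u" and r: "r < card V" and c: "c < m"
  shows "(laplacian V E * mat (card V) m (\<lambda>(t, c). g c (vs ! t))) $$ (r, c)
           = laplacian_apply V E (g c) (vs ! r)"
proof -
  define L where "L u w = (if u = w then real (card {w \<in> V. E u w}) else if E u w then -1 else 0)"
    for u w
  have vs: "length vs = card V" "distinct vs" "set vs = V" using V by (auto simp: vs_def)
  have "laplacian V E = mat (card V) (card V) (\<lambda>(i, j). L (vs ! i) (vs ! j))"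
    using vs by (auto simp: laplacian_def vs_def L_def Let_def nth_eq_iff_index_eq intro!: cong_mat)
  then have "(laplacian V E * mat (card V) m (\<lambda>(t, c). g c (vs ! t))) $$ (r, c)
      = (\<Sum>t<length vs. L (vs ! r) (vs ! t) * g c (vs ! t))"
    using r c vs by (simp add: scalar_prod_def lessThan_atLeast0)
  also have "\<dots> = (\<Sum>w\<in>V. L (vs ! r) w * g c w)"
    using sum_nth_distinct[OF vs(2)] vs(3) by simp
  also have "\<dots> = laplacian_apply V E (g c) (vs ! r)"
  proof -
    let ?u = "vs ! r"
    have u: "?u \<in> V" using r vs by (auto simp: in_set_conv_nth)
    have "(\<Sum>w\<in>V. L ?u w * g c w)
        = (\<Sum>w\<in>V. (if ?u = w then real (card {w \<in> V. E ?u w}) * g c w else 0)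
                   + (if E ?u w then - g c w else 0))"
      by (rule sum.cong) (auto simp: L_def irrefl)
    also have "\<dots> = real (card {w \<in> V. E ?u w}) * g c ?u - (\<Sum>w\<in>{w\<in>V. E ?u w}. g c w)"
      using V u by (simp add: sum.distrib sum.If_cases sum_negf) (simp add: Int_def)
    finally show ?thesis by (simp add: laplacian_apply_def sum_subtractf)
  qed
  finally show ?thesis .
qed

lemma laplacian_eigenvalues_eq_sort:
  fixes V :: "'v::linorder set" and f :: "'v \<Rightarrow> 'v \<Rightarrow> real"
  assumes V: "finite V" and irrefl: "\<And>u. \<not> E u u"
    and eigen: "\<And>v u. v \<in> V \<Longrightarrow> u \<in> V \<Longrightarrow> laplacian_apply V E (f v) u = \<Lambda> v * f v u"
    and orth: "\<And>v v'. v \<in> V \<Longrightarrow> v' \<in> V \<Longrightarrow> v \<noteq> v' \<Longrightarrow> (\<Sum>w\<in>V. f v w * f v' w) = 0"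
    and nonzero: "\<And>v. v \<in> V \<Longrightarrow> \<exists>w\<in>V. f v w \<noteq> 0"
  shows "laplacian_eigenvalues V E = sort (map \<Lambda> (sorted_list_of_set V))"
proof -
  define vs where "vs = sorted_list_of_set V"
  define n where "n = card V"
  have vs: "length vs = n" "distinct vs" "set vs = V" using V by (auto simp: vs_def n_def)
  have vs_nth: "t < n \<Longrightarrow> vs ! t \<in> V" for t using vs by auto
  have vs_inj: "i < n \<Longrightarrow> j < n \<Longrightarrow> vs ! i = vs ! j \<longleftrightarrow> i = j" for i j
    using vs by (simp add: nth_eq_iff_index_eq)
  define P where "P = mat n n (\<lambda>(t, c). f (vs ! c) (vs ! t))"
  have P: "P \<in> carrier_mat n n" unfolding P_def by simp
  have L: "laplacian V E \<in> carrier_mat n n"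
    by (simp add: laplacian_def Let_def n_def V)
  have "laplacian V E * P = P * mat_diag n (\<lambda>c. \<Lambda> (vs ! c))"
  proof (rule eq_matI)
    fix r c assume "r < dim_row (P * mat_diag n (\<lambda>c. \<Lambda> (vs ! c)))"
      and "c < dim_col (P * mat_diag n (\<lambda>c. \<Lambda> (vs ! c)))"
    then have rc: "r < n" "c < n" using P by (auto simp: mat_diag_def)
    then show "(laplacian V E * P) $$ (r, c) = (P * mat_diag n (\<lambda>c. \<Lambda> (vs ! c))) $$ (r, c)"
      using laplacian_mult_mat[where E = E and r = r and c = c and m = n and g = "\<lambda>c. f (vs ! c)",
          OF V irrefl]
        eigen[OF vs_nth vs_nth]
      by (simp add: mat_diag_mult_right[OF P]) (simp add: P_def vs_def n_def)
  qed (use P L in \<open>auto simp: mat_diag_def\<close>)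
  moreover have "det P \<noteq> 0"
  proof (rule det_ne_zero_if_orthogonal_columns[OF P])
    fix i j assume "i < n" "j < n" "i \<noteq> j"
    then show "(\<Sum>t<n. P $$ (t, i) * P $$ (t, j)) = 0"
      using orth[OF vs_nth vs_nth] vs_inj vs
        sum_nth_distinct[OF vs(2), of "\<lambda>w. f (vs ! i) w * f (vs ! j) w"]
      by (simp add: P_def)
  next
    fix j assume j: "j < n"
    obtain w where "w \<in> V" "f (vs ! j) w \<noteq> 0" using nonzero vs_nth j by blast
    then obtain t where "t < n" "f (vs ! j) (vs ! t) \<noteq> 0" using vs by (auto simp: in_set_conv_nth)
    then show "\<exists>t<n. P $$ (t, j) \<noteq> 0" using j by (auto simp: P_def)
  qed
  ultimately have "char_poly (laplacian V E) = (\<Prod>a\<leftarrow>map (\<lambda>c. \<Lambda> (vs ! c)) [0..<n]. [:- a, 1:])"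
    by (rule char_poly_diagonalizable[OF L P])
  also have "map (\<lambda>c. \<Lambda> (vs ! c)) [0..<n] = map \<Lambda> vs"
    using vs by (simp add: list_eq_iff_nth_eq)
  finally show ?thesis
    by (simp only: laplacian_eigenvalues_def proots_prod_linear_factors sorted_list_of_multiset_mset vs_def)
qed

lemma nth_one_sort_map:
  assumes "distinct vs" and "v\<^sub>0 \<in> set vs" and "v\<^sub>1 \<in> set vs" and "v\<^sub>0 \<noteq> v\<^sub>1"
    and "f v\<^sub>0 \<le> m" and "f v\<^sub>1 = m" and "\<And>v. v \<in> set vs \<Longrightarrow> v \<noteq> v\<^sub>0 \<Longrightarrow> m \<le> f v"
  shows "sort (map f vs) ! 1 = m"
proof -
  define rest where "rest = filter (\<lambda>v. v \<noteq> v\<^sub>0 \<and> v \<noteq> v\<^sub>1) vs"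
  define pair where "pair = filter (\<lambda>v. v = v\<^sub>0 \<or> v = v\<^sub>1) vs"
  have "set pair = {v\<^sub>0, v\<^sub>1}" and "distinct pair"
    using assms(1-3) by (auto simp: pair_def)
  then have "mset pair = {#v\<^sub>0, v\<^sub>1#}"
    using assms(4) mset_set_set[of pair] by simp
  moreover have "mset vs = mset pair + mset rest"
    unfolding rest_def pair_def mset_filter by (rule trans[OF multiset_partition]) simp
  ultimately have "mset vs = {#v\<^sub>0, v\<^sub>1#} + mset rest" by simp
  then have "mset (f v\<^sub>0 # m # sort (map f rest)) = mset (map f vs)"
    using assms(6) by (simp add: mset_map)
  moreover have "sorted (f v\<^sub>0 # m # sort (map f rest))"
    using assms(5,7) by (auto simp: rest_def intro: order_trans)
  ultimately have "sort (map f vs) = f v\<^sub>0 # m # sort (map f rest)"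
    by (rule properties_for_sort)
  then show ?thesis by simp
qed

section \<open>Weighted Helmert vectors\<close>

text \<open>For positive weights \<open>w\<close>, the constant vector and \<open>helmert w 1, \<dots>, helmert w (m - 1)\<close>
  form an orthogonal basis of the functions on \<open>{..<m}\<close> under the \<open>w\<close>-weighted inner product.\<close>
definition helmert :: "(nat \<Rightarrow> 'a::comm_ring_1) \<Rightarrow> nat \<Rightarrow> nat \<Rightarrow> 'a" where
  "helmert w t b = (if b < t then w t else if b = t then - (\<Sum>c<t. w c) else 0)"

lemma sum_weighted_helmert:
  assumes "t < m"
  shows "(\<Sum>b<m. w b * helmert w t b) = 0"
proof -
  have "(\<Sum>b<m. w b * helmert w t b) = (\<Sum>b<Suc t. w b * helmert w t b)"
    by (rule sum.mono_neutral_right) (use assms in \<open>auto simp: helmert_def\<close>)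
  also have "\<dots> = (\<Sum>b<t. w b * w t) - w t * (\<Sum>c<t. w c)"
    by (simp add: helmert_def)
  finally show ?thesis by (simp add: sum_distrib_right[symmetric] mult.commute)
qed

lemma sum_weighted_helmert_mult:
  assumes "t < t'" and "t' < m"
  shows "(\<Sum>b<m. w b * helmert w t b * helmert w t' b) = 0"
proof -
  have "(\<Sum>b<m. w b * helmert w t b * helmert w t' b) = (\<Sum>b<m. w b * helmert w t b) * w t'"
    unfolding sum_distrib_right by (rule sum.cong) (use assms in \<open>auto simp: helmert_def\<close>)
  then show ?thesis using sum_weighted_helmert[of t m w] assms by simp
qed

section \<open>The graph C(\<alpha>, \<alpha> + 1, ..., \<alpha> + k - 1)\<close>

lemma sum_lessThan_remove_split:
  fixes a k :: nat
  assumes "a < k"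
  shows "(\<Sum>b\<in>{..<k} - {a}. f b) = (\<Sum>b<a. f b) + (\<Sum>b\<in>{a<..<k}. f b)"
proof -
  have "{..<k} - {a} = {..<a} \<union> {a<..<k}" using assms by auto
  moreover have "sum f ({..<a} \<union> {a<..<k}) = sum f {..<a} + sum f {a<..<k}"
    by (rule sum.union_disjoint) auto
  ultimately show ?thesis by simp
qed

lemma sum_greaterThanLessThan_split:
  fixes a t k :: nat
  assumes "a < t" and "t < k"
  shows "(\<Sum>b\<in>{a<..<k}. f b) = (\<Sum>b\<in>{a<..<t}. f b) + f t + (\<Sum>b\<in>{t<..<k}. f b)"
proof -
  have "{a<..<k} = {a<..<t} \<union> ({t} \<union> {t<..<k})" using assms by auto
  then show ?thesis by (simp add: sum.union_disjoint add_ac)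
qed

locale consecutive_C =
  fixes k \<alpha> :: nat
  assumes k_ge_4: "4 \<le> k" and even_k: "even k" and alpha_pos: "1 \<le> \<alpha>"
begin

definition sizes :: "nat list" where
  "sizes = map (\<lambda>i. \<alpha> + i) [0..<k]"

definition V :: "(nat \<times> nat) set" where
  "V = {(i, j). i < k \<and> j < \<alpha> + i}"

text \<open>Blocks are indexed from 0, so the cliques \<open>\<pi>\<^sub>1, \<pi>\<^sub>3, \<dots>\<close> of the paper are the even blocks here.\<close>
definition adj :: "nat \<times> nat \<Rightarrow> nat \<times> nat \<Rightarrow> bool" where
  "adj u v \<longleftrightarrow> u \<noteq> v \<and> u \<in> V \<and> v \<in> V \<and>
     (if fst u = fst v then even (fst u) else odd (max (fst u) (fst v)))"

lemma Cverts_sizes: "Cverts sizes = V"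
  unfolding Cverts_def V_def sizes_def by auto

lemma Cadj_sizes: "Cadj sizes = adj"
proof (intro ext)
  fix u v
  have "sizes \<noteq> []" and "length sizes = k" using k_ge_4 by (auto simp: sizes_def)
  then have "Cadj sizes u v \<longleftrightarrow> u \<noteq> v \<and> u \<in> V \<and> v \<in> V \<and>
     (if fst u = fst v then even (k - fst u) else odd (k - max (fst u) (fst v)))"
    by (simp add: Cadj_iff Cverts_sizes)
  moreover have "u \<in> V \<Longrightarrow> v \<in> V \<Longrightarrow> fst u < k \<and> fst v < k" unfolding V_def by auto
  ultimately show "Cadj sizes u v \<longleftrightarrow> adj u v"
    unfolding adj_def using even_k by (auto simp: max_def even_diff_nat split: if_splits)
qed

lemma finite_V: "finite V"
proof -
  have "V \<subseteq> {..<k} \<times> {..<\<alpha> + k}" unfolding V_def by auto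
  then show ?thesis by (rule finite_subset) auto
qed

lemma sum_V: "(\<Sum>w\<in>V. g w) = (\<Sum>b<k. \<Sum>y<\<alpha> + b. g (b, y))"
proof -
  have "V = Sigma {..<k} (\<lambda>b. {..<\<alpha> + b})" unfolding V_def by auto
  then show ?thesis by (simp add: sum.Sigma)
qed

subsection \<open>Clique number\<close>

lemma clique_same_even_block:
  assumes "S \<in> cliques V adj" and "u \<in> S" and "w \<in> S" and "even (fst u)" and "even (fst w)"
  shows "fst u = fst w"
  using assms by (auto simp: cliques_def adj_def max_def split: if_splits)

lemma clique_even_block_below_odd:
  assumes "S \<in> cliques V adj" and "u \<in> S" and "w \<in> S" and "even (fst u)" and "odd (fst w)"
  shows "fst u < fst w"
proof -
  have "u \<noteq> w" using assms(4,5) by auto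
  then have "adj u w" using assms(1-3) by (auto simp: cliques_def)
  then show ?thesis using assms(4,5) by (auto simp: adj_def max_def split: if_splits)
qed

lemma card_clique_odd_blocks:
  assumes S: "S \<in> cliques V adj" and e: "\<And>w. w \<in> S \<Longrightarrow> odd (fst w) \<Longrightarrow> e \<le> fst w"
  shows "card {w\<in>S. odd (fst w)} \<le> k div 2 - e div 2"
proof -
  let ?Od = "{w\<in>S. odd (fst w)}"
  have "inj_on (\<lambda>w. fst w div 2) ?Od"
  proof (rule inj_onI)
    fix u w assume u: "u \<in> ?Od" and w: "w \<in> ?Od" and eq: "fst u div 2 = fst w div 2"
    have "fst u = fst w"
      using u w eq by (metis (mono_tags, lifting) mem_Collect_eq odd_two_times_div_two_succ)
    show "u = w"
    proof (rule ccontr)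
      assume "u \<noteq> w"
      then have "adj u w" using S u w by (auto simp: cliques_def)
      then show False using \<open>fst u = fst w\<close> w by (auto simp: adj_def)
    qed
  qed
  moreover have "(\<lambda>w. fst w div 2) ` ?Od \<subseteq> {e div 2..<k div 2}"
  proof (rule image_subsetI)
    fix w assume w: "w \<in> ?Od"
    have "fst w < k" using w S by (auto simp: cliques_def V_def)
    moreover have "odd (fst w)" using w by simp
    ultimately have "fst w div 2 < k div 2"
      using odd_two_times_div_two_succ[of "fst w"] even_two_times_div_two[OF even_k] by linarith
    moreover have "e div 2 \<le> fst w div 2" using w e by (blast intro: div_le_mono)
    ultimately show "fst w div 2 \<in> {e div 2..<k div 2}" by simp
  qed
  ultimately have "card ?Od \<le> card {e div 2..<k div 2}" by (rule card_inj_on_le) simp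
  then show ?thesis by simp
qed

lemma card_clique_le:
  assumes S: "S \<in> cliques V adj"
  shows "card S \<le> \<alpha> + k - 1"
proof -
  let ?Ev = "{w\<in>S. even (fst w)}" and ?Od = "{w\<in>S. odd (fst w)}"
  have "finite S" using S finite_V by (auto simp: cliques_def intro: finite_subset)
  then have "card (?Ev \<union> ?Od) = card ?Ev + card ?Od" by (intro card_Un_disjoint) auto
  moreover have "?Ev \<union> ?Od = S" by auto
  ultimately have card_S: "card S = card ?Ev + card ?Od" by simp
  show ?thesis
  proof (cases "?Ev = {}")
    case True
    then have "card ?Ev = 0" by (simp only: card.empty)
    moreover have "card ?Od \<le> k div 2" using card_clique_odd_blocks[OF S, of 0] by simp
    ultimately show ?thesis using card_S k_ge_4 div_le_dividend[of k 2] by linarith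
  next
    case False
    then obtain u where u: "u \<in> S" "even (fst u)" by auto
    have "fst u < k" using u S by (auto simp: cliques_def V_def)
    then have e: "fst u \<le> k - 2" using u(2) even_k by (auto elim!: evenE)
    have "?Ev \<subseteq> {fst u} \<times> {..<\<alpha> + fst u}"
      using clique_same_even_block[OF S u(1) _ u(2)] S by (fastforce simp: cliques_def V_def)
    then have "card ?Ev \<le> \<alpha> + fst u"
      using card_mono[of "{fst u} \<times> {..<\<alpha> + fst u}" ?Ev] by (simp add: card_cartesian_product)
    moreover have "card ?Od \<le> k div 2 - fst u div 2"
    proof (rule card_clique_odd_blocks[OF S])
      fix w assume "w \<in> S" "odd (fst w)"
      then show "fst u \<le> fst w" using clique_even_block_below_odd[OF S u(1) _ u(2)] by fastforce
    qed
    moreover have "k div 2 - fst u div 2 + fst u + 1 \<le> k"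
      using e u(2) even_k k_ge_4 even_two_times_div_two[of "fst u"] even_two_times_div_two[of k]
      by linarith
    ultimately show ?thesis using card_S by linarith
  qed
qed

lemma clique_number_V: "clique_number V adj = \<alpha> + k - 1"
proof (rule clique_number_eqI[OF finite_V _ _ card_clique_le])
  show "{k - 2} \<times> {..<\<alpha> + (k - 2)} \<union> {(k - 1, 0)} \<in> cliques V adj"
    using k_ge_4 even_k alpha_pos unfolding cliques_def adj_def V_def by (auto simp: max_def)
  show "card ({k - 2} \<times> {..<\<alpha> + (k - 2)} \<union> {(k - 1, 0)}) = \<alpha> + k - 1"
    using k_ge_4 by (simp add: card_cartesian_product)
qed

subsection \<open>An orthogonal eigenbasis of the Laplacian\<close>

definition bsize :: "nat \<Rightarrow> real" where
  "bsize b = real (\<alpha> + b)"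

definition below :: "nat \<Rightarrow> real" where
  "below t = (\<Sum>b<t. bsize b)"

definition odd_above :: "nat \<Rightarrow> real" where
  "odd_above t = (\<Sum>b\<in>{t<..<k}. if odd b then bsize b else 0)"

definition block_vec :: "nat \<Rightarrow> nat \<Rightarrow> real" where
  "block_vec t = (if t = 0 then (\<lambda>_. 1) else helmert bsize t)"

text \<open>The eigenbasis is indexed by the vertices: \<open>(t, 0)\<close> carries a vector that is constant on every
  block, \<open>(t, j)\<close> with \<open>j > 0\<close> a Helmert vector supported on block \<open>t\<close>.\<close>
definition eigvec :: "nat \<times> nat \<Rightarrow> nat \<times> nat \<Rightarrow> real" where
  "eigvec v w = (if snd v = 0 then block_vec (fst v) (fst w)
     else if fst w = fst v then helmert (\<lambda>_. 1) (snd v) (snd w) else 0)"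

text \<open>\<open>(if odd t then below t else 0) + odd_above t\<close> is the number of neighbours that a vertex of
  block \<open>t\<close> has outside its own block.\<close>
definition eigval :: "nat \<times> nat \<Rightarrow> real" where
  "eigval v = (if snd v = 0
     then (if fst v = 0 then 0 else (if odd (fst v) then below (Suc (fst v)) else 0) + odd_above (fst v))
     else (if odd (fst v) then below (fst v) else bsize (fst v)) + odd_above (fst v))"

lemma eigvec_Pair: "eigvec (t, j) w = (if j = 0 then block_vec t (fst w)
    else if fst w = t then helmert (\<lambda>_. 1) j (snd w) else 0)"
  by (simp add: eigvec_def)

lemma block_vec_eq:
  "block_vec t b = (if t = 0 then 1 else if b < t then bsize t else if b = t then - below t else 0)"
  by (simp add: block_vec_def helmert_def below_def)

lemma helmert_one: "helmert (\<lambda>_. 1) j y = (if y < j then 1 else if y = j then - real j else (0::real))"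
  by (simp add: helmert_def)

lemma bsize_pos: "0 < bsize b"
  using alpha_pos by (simp add: bsize_def)

lemma below_Suc: "below (Suc t) = below t + bsize t"
  by (simp add: below_def)

lemma bsize_le_below: "b < t \<Longrightarrow> bsize b \<le> below t"
  unfolding below_def by (rule member_le_sum) (use bsize_pos in \<open>auto intro: less_imp_le\<close>)

lemma below_nonneg: "0 \<le> below t"
  unfolding below_def by (rule sum_nonneg) (use bsize_pos in \<open>auto intro: less_imp_le\<close>)

lemma odd_above_nonneg: "0 \<le> odd_above t"
  unfolding odd_above_def by (rule sum_nonneg) (use bsize_pos in \<open>auto intro: less_imp_le\<close>)

lemma sum_V_blockwise: "(\<Sum>w\<in>V. c (fst w)) = (\<Sum>b<k. bsize b * c b)"
  by (simp add: sum_V bsize_def)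

lemma sum_neighbours:
  assumes u: "(a, x) \<in> V"
  shows "(\<Sum>w\<in>{w\<in>V. adj (a, x) w}. g w) =
    (\<Sum>b\<in>{..<k} - {a}. if odd (max a b) then (\<Sum>y<\<alpha> + b. g (b, y)) else 0)
    + (if even a then (\<Sum>y\<in>{..<\<alpha> + a} - {x}. g (a, y)) else 0)"
proof -
  have a: "a < k" using u by (simp add: V_def)
  have "(\<Sum>w\<in>{w\<in>V. adj (a, x) w}. g w) = (\<Sum>w\<in>V. if adj (a, x) w then g w else 0)"
    using finite_V by (simp add: sum.inter_filter)
  also have "\<dots> = (\<Sum>y<\<alpha> + a. if adj (a, x) (a, y) then g (a, y) else 0) +
      (\<Sum>b\<in>{..<k} - {a}. \<Sum>y<\<alpha> + b. if adj (a, x) (b, y) then g (b, y) else 0)"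
    using a by (simp add: sum_V sum.remove)
  also have "(\<Sum>y<\<alpha> + a. if adj (a, x) (a, y) then g (a, y) else 0)
      = (if even a then (\<Sum>y\<in>{..<\<alpha> + a} - {x}. g (a, y)) else 0)"
  proof (cases "even a")
    case True
    have "(\<Sum>y<\<alpha> + a. if adj (a, x) (a, y) then g (a, y) else 0) = (\<Sum>y<\<alpha> + a. if y \<noteq> x then g (a, y) else 0)"
      by (rule sum.cong) (use u True in \<open>auto simp: adj_def V_def\<close>)
    also have "\<dots> = (\<Sum>y\<in>{..<\<alpha> + a} - {x}. g (a, y))"
      by (simp add: sum.If_cases Diff_eq Int_def Compl_eq)
    finally show ?thesis using True by simp
  qed (auto simp: adj_def intro!: sum.neutral)
  also have "(\<Sum>b\<in>{..<k} - {a}. \<Sum>y<\<alpha> + b. if adj (a, x) (b, y) then g (b, y) else 0) =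
     (\<Sum>b\<in>{..<k} - {a}. if odd (max a b) then (\<Sum>y<\<alpha> + b. g (b, y)) else 0)"
    by (rule sum.cong) (use u in \<open>auto simp: adj_def V_def intro!: sum.cong\<close>)
  finally show ?thesis by (simp only: add.commute)
qed

lemma sum_adjacent_blocks:
  assumes "a < k"
  shows "(\<Sum>b\<in>{..<k} - {a}. if odd (max a b) then bsize b * c else 0)
    = ((if odd a then below a else 0) + odd_above a) * c"
proof -
  have "(\<Sum>b<a. if odd (max a b) then bsize b * c else 0) = (if odd a then below a else 0) * c"
    by (auto simp: below_def sum_distrib_right max_def intro!: sum.cong)
  moreover have "(\<Sum>b\<in>{a<..<k}. if odd (max a b) then bsize b * c else 0) = odd_above a * c"
    by (auto simp: odd_above_def sum_distrib_right max_def intro!: sum.cong)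
  ultimately show ?thesis
    by (simp add: sum_lessThan_remove_split[OF assms] distrib_right)
qed

text \<open>The Laplacian applied to a vector that is constant on blocks, evaluated on block \<open>a\<close>.\<close>
lemma block_vec_eigen:
  assumes a: "a < k" and t: "t < k"
  shows "(\<Sum>b\<in>{..<k} - {a}. if odd (max a b) then bsize b * (block_vec t a - block_vec t b) else 0)
     = eigval (t, 0) * block_vec t a"
proof (cases "t = 0")
  case True
  show ?thesis unfolding True by (simp add: block_vec_eq eigval_def cong: if_cong)
next
  case t0: False
  define \<phi> where "\<phi> b = (if odd (max a b) then bsize b * (block_vec t a - block_vec t b) else 0)" for b
  consider "t < a" | "a = t" | "a < t" by linarith
  then have "(\<Sum>b<a. \<phi> b) + (\<Sum>b\<in>{a<..<k}. \<phi> b) = eigval (t, 0) * block_vec t a"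
  proof cases
    case 1
    have "(\<Sum>b<a. \<phi> b) = (if odd a then - (\<Sum>b<a. bsize b * helmert bsize t b) else 0)"
      using 1 t0 by (auto simp: \<phi>_def max_def block_vec_def helmert_def sum_negf[symmetric] intro!: sum.cong)
    also have "\<dots> = 0" using sum_weighted_helmert[OF 1, of bsize] by simp
    finally show ?thesis
      using 1 t0 by (auto simp: \<phi>_def block_vec_eq intro!: sum.neutral)
  next
    case 2
    have "(\<Sum>b<a. \<phi> b) = (if odd t then (\<Sum>b<t. bsize b * (- below t - bsize t)) else 0)"
      using 2 t0 by (auto simp: \<phi>_def max_def block_vec_eq intro!: sum.cong)
    also have "\<dots> = (if odd t then below t * (- below t - bsize t) else 0)"
      by (simp add: below_def sum_distrib_right)
    also have "\<dots> = (if odd t then - below t * below (Suc t) else 0)"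
      by (simp add: below_Suc algebra_simps)
    finally have A: "(\<Sum>b<a. \<phi> b) = (if odd t then - below t * below (Suc t) else 0)" .
    have B: "(\<Sum>b\<in>{a<..<k}. \<phi> b) = - below t * odd_above t"
      using 2 t0 by (auto simp: \<phi>_def max_def block_vec_eq odd_above_def sum_distrib_left intro!: sum.cong)
    show ?thesis using A B 2 t0 by (simp add: block_vec_eq eigval_def algebra_simps)
  next
    case 3
    have A: "(\<Sum>b<a. \<phi> b) = 0"
      using 3 by (auto simp: \<phi>_def block_vec_eq intro!: sum.neutral)
    have B1: "(\<Sum>b\<in>{a<..<t}. \<phi> b) = 0"
      using 3 by (auto simp: \<phi>_def block_vec_eq intro!: sum.neutral)
    have B2: "(\<Sum>b\<in>{t<..<k}. \<phi> b) = odd_above t * bsize t"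
      using 3 t0 by (auto simp: \<phi>_def max_def block_vec_eq odd_above_def sum_distrib_right intro!: sum.cong)
    have B3: "\<phi> t = (if odd t then below (Suc t) * bsize t else 0)"
      using 3 t0 by (auto simp: \<phi>_def max_def block_vec_eq below_Suc algebra_simps)
    show ?thesis using sum_greaterThanLessThan_split[OF 3 t, of \<phi>] A B1 B2 B3 3 t0
      by (auto simp: block_vec_eq eigval_def algebra_simps)
  qed
  then show ?thesis by (simp add: \<phi>_def sum_lessThan_remove_split[OF a])
qed

lemma laplacian_apply_V:
  assumes "(a, x) \<in> V"
  shows "laplacian_apply V adj f (a, x) =
    (\<Sum>b\<in>{..<k} - {a}. if odd (max a b) then (\<Sum>y<\<alpha> + b. f (a, x) - f (b, y)) else 0)
    + (if even a then (\<Sum>y\<in>{..<\<alpha> + a} - {x}. f (a, x) - f (a, y)) else 0)"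
  using sum_neighbours[OF assms, of "\<lambda>w. f (a, x) - f w"] by (simp add: laplacian_apply_def)

lemma laplacian_block_vec:
  assumes u: "(a, x) \<in> V" and t: "t < k"
  shows "laplacian_apply V adj (\<lambda>w. block_vec t (fst w)) (a, x) = eigval (t, 0) * block_vec t a"
proof -
  have a: "a < k" using u by (simp add: V_def)
  have "(\<Sum>b\<in>{..<k} - {a}. if odd (max a b) then (\<Sum>y<\<alpha> + b. block_vec t a - block_vec t b) else 0)
      = (\<Sum>b\<in>{..<k} - {a}. if odd (max a b) then bsize b * (block_vec t a - block_vec t b) else 0)"
    by (rule sum.cong) (simp_all add: bsize_def)
  then show ?thesis using block_vec_eigen[OF a t] by (simp add: laplacian_apply_V[OF u] cong: if_cong)
qed

lemma laplacian_helmert_vec: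
  assumes u: "(a, x) \<in> V" and t: "t < k" and j: "0 < j" "j < \<alpha> + t"
  shows "laplacian_apply V adj (\<lambda>w. if fst w = t then helmert (\<lambda>_. 1) j (snd w) else 0) (a, x)
    = eigval (t, j) * (if a = t then helmert (\<lambda>_. 1) j x else 0)"
proof -
  let ?h = "\<lambda>w. if fst w = t then helmert (\<lambda>_. 1) j (snd w) else (0::real)"
  show ?thesis
  proof (cases "a = t")
    case True
    have a: "a < k" "x < \<alpha> + a" using u by (simp_all add: V_def)
    have C: "(\<Sum>b\<in>{..<k} - {a}. if odd (max a b) then (\<Sum>y<\<alpha> + b. ?h (a, x) - ?h (b, y)) else 0)
        = (\<Sum>b\<in>{..<k} - {a}. if odd (max a b) then bsize b * helmert (\<lambda>_. 1) j x else 0)"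
      by (rule sum.cong) (use True in \<open>auto simp: bsize_def\<close>)
    have "(\<Sum>y\<in>{..<\<alpha> + a} - {x}. ?h (a, x) - ?h (a, y))
        = real (\<alpha> + a - 1) * helmert (\<lambda>_. 1) j x - ((\<Sum>y<\<alpha> + a. helmert (\<lambda>_. 1) j y) - helmert (\<lambda>_. 1) j x)"
      using True a by (simp add: sum_subtractf sum_diff1)
    also have "\<dots> = bsize t * helmert (\<lambda>_. 1) j x"
      using sum_weighted_helmert[of j "\<alpha> + a" "\<lambda>_. 1::real"] j True a
      by (simp add: bsize_def of_nat_diff algebra_simps)
    finally have within: "(\<Sum>y\<in>{..<\<alpha> + a} - {x}. ?h (a, x) - ?h (a, y)) = bsize t * helmert (\<lambda>_. 1) j x" .
    show ?thesis
      unfolding laplacian_apply_V[OF u] C within sum_adjacent_blocks[OF a(1)]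
      using True j by (simp add: eigval_def algebra_simps)
  next
    case False
    have "(\<Sum>b\<in>{..<k} - {a}. if odd (max a b) then (\<Sum>y<\<alpha> + b. ?h (a, x) - ?h (b, y)) else 0) = 0"
    proof (intro sum.neutral ballI)
      fix b
      show "(if odd (max a b) then (\<Sum>y<\<alpha> + b. ?h (a, x) - ?h (b, y)) else 0) = 0"
        using False sum_weighted_helmert[of j "\<alpha> + t" "\<lambda>_. 1::real"] j
        by (cases "b = t") (simp_all add: sum_negf)
    qed
    then show ?thesis using False by (simp add: laplacian_apply_V[OF u])
  qed
qed

lemma laplacian_eigvec:
  assumes u: "u \<in> V" and v: "v \<in> V"
  shows "laplacian_apply V adj (eigvec v) u = eigval v * eigvec v u"
proof -
  obtain a x t j where u_def: "u = (a, x)" and v_def: "v = (t, j)" by fastforce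
  have t: "t < k" "j < \<alpha> + t" using v v_def by (auto simp: V_def)
  show ?thesis
  proof (cases "j = 0")
    case True
    then have "eigvec v = (\<lambda>w. block_vec t (fst w))" by (simp add: fun_eq_iff v_def eigvec_def)
    then show ?thesis using laplacian_block_vec[of a x t] u t True by (simp add: u_def v_def)
  next
    case False
    then have "eigvec v = (\<lambda>w. if fst w = t then helmert (\<lambda>_. 1) j (snd w) else 0)"
      by (simp add: fun_eq_iff v_def eigvec_def)
    then show ?thesis using laplacian_helmert_vec[of a x t j] u t False by (simp add: u_def v_def)
  qed
qed

lemma sum_block_vec_mult:
  assumes "t \<noteq> t'" and "t < k" and "t' < k"
  shows "(\<Sum>w\<in>V. block_vec t (fst w) * block_vec t' (fst w)) = 0"
proof -
  have zero: "(\<Sum>b<k. bsize b * block_vec t b * block_vec t' b) = 0" if "t < t'" "t' < k" for t t'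
    using sum_weighted_helmert[of t' k bsize] sum_weighted_helmert_mult[of t t' k bsize] that
    by (cases "t = 0") (simp_all add: block_vec_def)
  have "(\<Sum>w\<in>V. block_vec t (fst w) * block_vec t' (fst w)) = (\<Sum>b<k. bsize b * block_vec t b * block_vec t' b)"
    using sum_V_blockwise[of "\<lambda>b. block_vec t b * block_vec t' b"] by (simp add: mult.assoc)
  also have "\<dots> = 0"
    using zero[of t t'] zero[of t' t] assms by (cases "t < t'") (simp_all add: mult_ac)
  finally show ?thesis .
qed

lemma sum_block_vec_helmert:
  assumes "t' < k" and "j' < \<alpha> + t'"
  shows "(\<Sum>w\<in>V. block_vec t (fst w) * (if fst w = t' then helmert (\<lambda>_. 1) j' (snd w) else 0)) = 0"
proof -
  have "(\<Sum>w\<in>V. block_vec t (fst w) * (if fst w = t' then helmert (\<lambda>_. 1) j' (snd w) else 0))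
     = (\<Sum>b<k. if b = t' then block_vec t t' * (\<Sum>y<\<alpha> + t'. helmert (\<lambda>_. 1) j' y) else 0)"
    unfolding sum_V by (rule sum.cong) (auto simp: sum_distrib_left)
  also have "\<dots> = block_vec t t' * (\<Sum>y<\<alpha> + t'. helmert (\<lambda>_. 1) j' y)"
    using assms(1) by simp
  finally show ?thesis using sum_weighted_helmert[of j' "\<alpha> + t'" "\<lambda>_. 1::real"] assms by simp
qed

lemma sum_helmert_mult:
  assumes "(t, j) \<noteq> (t', j')" and "t < k" and "j < \<alpha> + t" and "j' < \<alpha> + t'"
  shows "(\<Sum>w\<in>V. (if fst w = t then helmert (\<lambda>_. 1) j (snd w) else 0)
                * (if fst w = t' then helmert (\<lambda>_. 1) j' (snd w) else 0)) = (0::real)"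
proof (cases "t = t'")
  case True
  have "(\<Sum>w\<in>V. (if fst w = t then helmert (\<lambda>_. 1) j (snd w) else 0)
                * (if fst w = t' then helmert (\<lambda>_. 1) j' (snd w) else 0))
      = (\<Sum>b<k. if b = t then (\<Sum>y<\<alpha> + t. helmert (\<lambda>_. 1) j y * helmert (\<lambda>_. 1) j' y) else 0)"
    unfolding sum_V by (rule sum.cong) (auto simp: True)
  also have "\<dots> = (\<Sum>y<\<alpha> + t. helmert (\<lambda>_. 1) j y * helmert (\<lambda>_. 1::real) j' y)"
    using assms(2) by simp
  also have "\<dots> = 0"
    using sum_weighted_helmert_mult[of j j' "\<alpha> + t" "\<lambda>_. 1::real"]
      sum_weighted_helmert_mult[of j' j "\<alpha> + t" "\<lambda>_. 1::real"] True assms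
    by (cases "j < j'") (auto simp: mult.commute)
  finally show ?thesis .
qed (auto intro!: sum.neutral)

lemma eigvec_orthogonal:
  assumes "v \<in> V" and "v' \<in> V" and "v \<noteq> v'"
  shows "(\<Sum>w\<in>V. eigvec v w * eigvec v' w) = 0"
proof -
  obtain t j t' j' where v: "v = (t, j)" and v': "v' = (t', j')" by fastforce
  have bounds: "t < k" "t' < k" "j < \<alpha> + t" "j' < \<alpha> + t'" using assms v v' by (auto simp: V_def)
  consider "j = 0" "j' = 0" | "j = 0" "j' \<noteq> 0" | "j \<noteq> 0" "j' = 0" | "j \<noteq> 0" "j' \<noteq> 0" by blast
  then show ?thesis
  proof cases
    case 1
    then show ?thesis using sum_block_vec_mult[of t t'] bounds assms by (simp add: v v' eigvec_Pair)
  next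
    case 2
    then show ?thesis using sum_block_vec_helmert[of t' j' t] bounds by (simp add: v v' eigvec_Pair)
  next
    case 3
    then show ?thesis using sum_block_vec_helmert[of t j t'] bounds by (simp add: v v' eigvec_Pair mult.commute)
  next
    case 4
    then show ?thesis using sum_helmert_mult[of t j t' j'] bounds assms by (simp add: v v' eigvec_Pair)
  qed
qed

lemma eigvec_nonzero: "v \<in> V \<Longrightarrow> \<exists>w\<in>V. eigvec v w \<noteq> 0"
  using bsize_le_below[of 0 "fst v"] bsize_pos[of 0]
  by (intro bexI[of _ v], cases v) (auto simp: eigvec_def block_vec_eq helmert_one)

lemma laplacian_eigenvalues_V: "laplacian_eigenvalues V adj = sort (map eigval (sorted_list_of_set V))"
  by (rule laplacian_eigenvalues_eq_sort[OF finite_V _ laplacian_eigvec eigvec_orthogonal eigvec_nonzero])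
     (auto simp: adj_def)

lemma eigval_ge:
  assumes "v \<in> V" and "v \<noteq> (0, 0)"
  shows "bsize (k - 1) \<le> eigval v"
proof -
  obtain t j where v: "v = (t, j)" by fastforce
  have odd_last: "odd (k - 1)" using even_k k_ge_4 by simp
  have "t < k" using assms v by (simp add: V_def)
  then consider "t < k - 1" | "t = k - 1" by linarith
  then show ?thesis
  proof cases
    case 1
    have "bsize (k - 1) = (if odd (k - 1) then bsize (k - 1) else 0)" using odd_last by simp
    also have "\<dots> \<le> odd_above t"
      unfolding odd_above_def
      by (rule member_le_sum[of "k - 1"]) (use 1 k_ge_4 bsize_pos in \<open>auto intro: less_imp_le\<close>)
    finally show ?thesis
      using assms v below_nonneg[of t] below_nonneg[of "Suc t"] bsize_pos[of t]
      by (auto simp: eigval_def)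
  next
    case 2
    have "bsize (k - 1) \<le> below (Suc t)" using 2 k_ge_4 bsize_le_below[of "k - 1" k] by simp
    moreover have "bsize (k - 1) \<le> below t"
    proof -
      have "bsize (k - 1) \<le> bsize 0 + bsize (k - 2)" using alpha_pos k_ge_4 by (simp add: bsize_def)
      also have "\<dots> = (\<Sum>b\<in>{0, k - 2}. bsize b)" using k_ge_4 by simp
      also have "\<dots> \<le> below t" unfolding below_def
        by (rule sum_mono2) (use 2 k_ge_4 bsize_pos in \<open>auto intro: less_imp_le\<close>)
      finally show ?thesis .
    qed
    ultimately show ?thesis
      using 2 odd_last odd_above_nonneg[of t] by (auto simp: v eigval_def)
  qed
qed

lemma eigval_second: "eigval (k - 2, 0) = bsize (k - 1)"
proof -
  have "{k - 2<..<k} = {k - 1}" using k_ge_4 by auto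
  moreover have "odd (k - 1)" "even (k - 2)" "k - 2 \<noteq> 0" using even_k k_ge_4 by auto
  ultimately show ?thesis by (simp add: eigval_def odd_above_def)
qed

lemma alg_conn_V: "alg_conn V adj = real (\<alpha> + k - 1)"
proof -
  have "alg_conn V adj = sort (map eigval (sorted_list_of_set V)) ! 1"
    by (simp add: alg_conn_def laplacian_eigenvalues_V)
  also have "\<dots> = bsize (k - 1)"
    by (rule nth_one_sort_map[where v\<^sub>0 = "(0, 0)" and v\<^sub>1 = "(k - 2, 0)"])
       (use finite_V alpha_pos k_ge_4 eigval_ge eigval_second less_imp_le[OF bsize_pos]
          in \<open>auto simp: V_def eigval_def\<close>)
  also have "\<dots> = real (\<alpha> + k - 1)" using k_ge_4 by (simp add: bsize_def)
  finally show ?thesis .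
qed

end

theorem corollary5p6:
  fixes k \<alpha> :: nat
  assumes "k \<ge> 4" and "even k" and "\<alpha> \<ge> 1"
  defines "as \<equiv> map (\<lambda>i. \<alpha> + i) [0..<k]"
  shows "real (clique_number (Cverts as) (Cadj as)) = alg_conn (Cverts as) (Cadj as)
         \<and> alg_conn (Cverts as) (Cadj as) = real (\<alpha> + k - 1)"
proof -
  interpret consecutive_C k \<alpha> using assms(1-3) by unfold_locales
  have "as = sizes" unfolding as_def sizes_def ..
  then have "Cverts as = V" and "Cadj as = adj" by (simp_all add: Cverts_sizes Cadj_sizes)
  then show ?thesis using clique_number_V alg_conn_V assms(1) by simp
qed

end
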